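(* Let $X$ be a connected, locally connected, Hausdorff, normal, first countable topological space, $V$ a Banach space with norm distance $d_V$, and $f:X\to V$ a continuous closed map that has local convexity data and is locally fiber connected. For $[x],[y]\in X_f$ let $d([x],[y])$ be the infimum of the lengths $l(\tilde f\circ\gamma)$ (computed with respect to $d_V$) over all continuous curves $\gamma:[a,b]\to X_f$ with $\gamma(a)=[x]$, $\gamma(b)=[y]$. Then $d$ is a metric on $X_f$, and the metric topology it defines coincides with the quotient topology of $X_f$.
   Context: A subset $C\subset V$ is a cone with vertex $v_0$ if $v_0\in C$ and $(1-\lambda)v_0+\lambda v\in C$ for every $\lambda\ge 0$ and every $v\in C$, $v\ne v_0$; it is a convex cone if it is moreover convex. A continuous map $f:X\to V$ has local convexity data if for each $x\in X$ and every sufficiently small open neighborhood $U_x$ of $x$ there is a convex cone $C_x\subset V$ with vertex $f(x)$, endowed with the subspace topology from $V$, such that (VN) $f(U_x)\subset C_x$ and $f(U_x)$ is a neighborhood of $f(x)$ in $C_x$; and (SLO) $f|_{U_x}:U_x\to C_x$ is an open map, and for every neighborhood $U'_x\subset U_x$ of $x$ the set $f(U'_x)$ is a neighborhood of $f(x)$ in $C_x$. A subset $A\subset X$ satisfies condition (LFC) if for every $a\in A$, the set $A$ does not intersect two different connected components of the fiber $f^{-1}(f(a))$. The map $f$ is locally fiber connected if for every $x\in X$, every open neighborhood of $x$ contains a neighborhood $U_x$ of $x$ satisfying (LFC). Declare $x\sim y$ in $X$ iff $f(x)=f(y)$ and $x,y$ lie in the same connected component of $f^{-1}(f(x))$; $X_f:=X/\!\sim$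 with the quotient topology, $\pi_f:X\to X_f$ is the projection and $\tilde f:X_f\to V$ is the unique map with $\tilde f\circ\pi_f=f$. (Under these hypotheses $X_f$ is path connected, so $d$ is finite.) *)

theory Defs
  imports "HOL-Analysis.Analysis"
begin

definition cone_with_vertex :: "'b::real_vector set \<Rightarrow> 'b \<Rightarrow> bool" where
  "cone_with_vertex C v0 \<longleftrightarrow> v0 \<in> C \<and>
     (\<forall>t::real. \<forall>v\<in>C. t \<ge> 0 \<and> v \<noteq> v0 \<longrightarrow> (1 - t) *\<^sub>R v0 + t *\<^sub>R v \<in> C)"

definition convex_cone_with_vertex :: "'b::real_vector set \<Rightarrow> 'b \<Rightarrow> bool" where
  "convex_cone_with_vertex C v0 \<longleftrightarrow> cone_with_vertex C v0 \<and> convex C"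

definition nbhd_in :: "'a topology \<Rightarrow> 'a set \<Rightarrow> 'a \<Rightarrow> bool" where
  "nbhd_in T S p \<longleftrightarrow> (\<exists>G. openin T G \<and> p \<in> G \<and> G \<subseteq> S)"

text \<open>Local convexity data: for each x, every sufficiently small open neighbourhood U
  of x (i.e. every open U with x in U contained in some fixed open W) admits a convex
  cone C with vertex f x satisfying (VN) and (SLO); C carries the subspace topology.\<close>
definition local_convexity_data :: "'a topology \<Rightarrow> ('a \<Rightarrow> 'b::real_normed_vector) \<Rightarrow> bool" where
  "local_convexity_data X f \<longleftrightarrow>
    (\<forall>x\<in>topspace X. \<exists>W. openin X W \<and> x \<in> W \<and>
      (\<forall>U. openin X U \<and> x \<in> U \<and> U \<subseteq> W \<longrightarrow>
        (\<exists>C. convex_cone_with_vertex C (f x) \<and>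
             f ` U \<subseteq> C \<and> nbhd_in (top_of_set C) (f ` U) (f x) \<and>
             open_map (subtopology X U) (top_of_set C) f \<and>
             (\<forall>U'. U' \<subseteq> U \<and> nbhd_in X U' x \<longrightarrow> nbhd_in (top_of_set C) (f ` U') (f x)))))"

definition fiber :: "'a topology \<Rightarrow> ('a \<Rightarrow> 'b) \<Rightarrow> 'a \<Rightarrow> 'a set" where
  "fiber X f a = {y \<in> topspace X. f y = f a}"

definition LFC :: "'a topology \<Rightarrow> ('a \<Rightarrow> 'b) \<Rightarrow> 'a set \<Rightarrow> bool" where
  "LFC X f A \<longleftrightarrow> (\<forall>a\<in>A. \<not> (\<exists>K1 K2.
      K1 \<in> connected_components_of (subtopology X (fiber X f a)) \<and>
      K2 \<in> connected_components_of (subtopology X (fiber X f a)) \<and>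
      K1 \<noteq> K2 \<and> A \<inter> K1 \<noteq> {} \<and> A \<inter> K2 \<noteq> {}))"

definition locally_fiber_connected :: "'a topology \<Rightarrow> ('a \<Rightarrow> 'b) \<Rightarrow> bool" where
  "locally_fiber_connected X f \<longleftrightarrow>
    (\<forall>x\<in>topspace X. \<forall>W. openin X W \<and> x \<in> W \<longrightarrow>
       (\<exists>U. U \<subseteq> W \<and> nbhd_in X U x \<and> LFC X f U))"

definition fclass :: "'a topology \<Rightarrow> ('a \<Rightarrow> 'b) \<Rightarrow> 'a \<Rightarrow> 'a set" where
  "fclass X f x = connected_component_of_set (subtopology X (fiber X f x)) x"

definition Xf :: "'a topology \<Rightarrow> ('a \<Rightarrow> 'b) \<Rightarrow> 'a set set" where
  "Xf X f = fclass X f ` topspace X"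

definition Xf_topology :: "'a topology \<Rightarrow> ('a \<Rightarrow> 'b) \<Rightarrow> 'a set topology" where
  "Xf_topology X f = topology (\<lambda>U. U \<subseteq> Xf X f \<and>
      openin X {x \<in> topspace X. fclass X f x \<in> U})"

definition ftilde :: "('a \<Rightarrow> 'b) \<Rightarrow> 'a set \<Rightarrow> 'b" where
  "ftilde f c = f (SOME x. x \<in> c)"

definition curve_length :: "(real \<Rightarrow> 'b::metric_space) \<Rightarrow> real \<Rightarrow> real \<Rightarrow> ennreal" where
  "curve_length g a b = (SUP ts \<in> {ts. ts \<noteq> [] \<and> sorted ts \<and> hd ts = a \<and> last ts = b}.
      ennreal (\<Sum>i < length ts - 1. dist (g (ts ! i)) (g (ts ! Suc i))))"

definition dXf :: "'a topology \<Rightarrow> ('a \<Rightarrow> 'b::metric_space) \<Rightarrow> 'a set \<Rightarrow> 'a set \<Rightarrow> ennreal" where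
  "dXf X f p q = (INF \<gamma> \<in> {(\<gamma>, a, b) | \<gamma> a b. a \<le> b \<and>
        continuous_map (top_of_set {a..b}) (Xf_topology X f) \<gamma> \<and> \<gamma> a = p \<and> \<gamma> b = q}.
      (case \<gamma> of (\<gamma>, a, b) \<Rightarrow> curve_length (ftilde f \<circ> \<gamma>) a b))"

end

theory Submission
  imports Defs
begin

text \<open>
  The projection \<open>fclass\<close> onto \<open>X\<^sub>f\<close> is an open map: on a convexity chart \<open>U\<close> at \<open>x\<close>,
  condition (LFC) makes the class of a point depend only on its value, so the saturation of an
  open set is open. \<open>X\<^sub>f\<close> is Hausdorff: classes with different values are separated by \<open>f\<close>;
  within a fibre, normality separates a class from the rest of the fibre, and as \<open>f\<close> is closed
  the separating sets can be shrunk to saturated ones.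

  The length distance is symmetric and satisfies the triangle inequality by reversing and
  concatenating curves. It is small near \<open>[x]\<close>, because straight segments in the convex set
  \<open>C\<close> lift to \<open>X\<^sub>f\<close> through \<open>U\<close>. Conversely, by (SLO) there is a radius \<open>r\<close> such that the
  points of \<open>C\<close> within \<open>r\<close> of \<open>f x\<close> lie in \<open>f\<close> of a closed neighbourhood of \<open>x\<close> inside \<open>U\<close>;
  a curve from \<open>[x]\<close> of length less than \<open>r\<close> therefore never leaves the image of \<open>U\<close>, since
  the parameters it spends there form a set that is open and, \<open>f\<close> being closed and
  \<open>X\<^sub>f\<close> Hausdorff, also closed. So balls of the distance and open sets of \<open>X\<^sub>f\<close> are
  mutually nested, and connectedness of \<open>X\<^sub>f\<close> makes the distance finite.
\<close>

section \<open>Length of curves\<close>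

fun polyline_length :: "(real \<Rightarrow> 'b::metric_space) \<Rightarrow> real list \<Rightarrow> real" where
  "polyline_length g (s # t # ts) = dist (g s) (g t) + polyline_length g (t # ts)"
| "polyline_length g _ = 0"

definition partitions :: "real \<Rightarrow> real \<Rightarrow> real list set" where
  "partitions a b = {ts. ts \<noteq> [] \<and> sorted ts \<and> hd ts = a \<and> last ts = b}"

lemma polyline_length_Cons:
  "polyline_length g (s # ts) = (if ts = [] then 0 else dist (g s) (g (hd ts)) + polyline_length g ts)"
  by (cases ts) auto

lemma sum_dist_eq_polyline_length:
  "(\<Sum>i < length ts - 1. dist (g (ts!i)) (g (ts!Suc i))) = polyline_length g ts"
proof (induction ts)
  case (Cons s ts)
  then show ?case
    by (cases ts) (simp_all add: sum.lessThan_Suc_shift del: sum.lessThan_Suc)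
qed simp

lemma curve_length_eq_SUP:
  "curve_length g a b = (SUP ts \<in> partitions a b. ennreal (polyline_length g ts))"
  unfolding curve_length_def partitions_def sum_dist_eq_polyline_length ..

lemma polyline_length_nonneg: "0 \<le> polyline_length g ts"
  by (induction g ts rule: polyline_length.induct) auto

lemma polyline_length_cong:
  "(\<And>t. t \<in> set ts \<Longrightarrow> g t = h t) \<Longrightarrow> polyline_length g ts = polyline_length h ts"
  by (induction g ts rule: polyline_length.induct) auto

lemma polyline_length_map: "polyline_length g (map \<phi> ts) = polyline_length (g \<circ> \<phi>) ts"
  by (induction "g \<circ> \<phi>" ts rule: polyline_length.induct) auto

lemma polyline_length_append:
  "polyline_length g (xs @ ys) = polyline_length g xs + polyline_length g ys +
     (if xs \<noteq> [] \<and> ys \<noteq> [] then dist (g (last xs)) (g (hd ys)) else 0)"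
  by (induction xs) (auto simp: polyline_length_Cons)

lemma polyline_length_rev: "polyline_length g (rev ts) = polyline_length g ts"
  by (induction ts) (auto simp: polyline_length_append polyline_length_Cons last_rev dist_commute)

lemma polyline_length_linepath:
  fixes v w :: "'b::real_normed_vector"
  assumes "sorted ts" "ts \<noteq> []"
  shows "polyline_length (linepath v w) ts = (last ts - hd ts) * dist v w"
  using assms
proof (induction ts)
  case (Cons s ts)
  show ?case
  proof (cases "ts = []")
    case False
    then have "s \<le> hd ts"
      using Cons.prems by (cases ts) auto
    moreover have "linepath v w s - linepath v w (hd ts) = (s - hd ts) *\<^sub>R (w - v)"
      by (simp add: linepath_def algebra_simps)
    ultimately have "dist (linepath v w s) (linepath v w (hd ts)) = (hd ts - s) * dist v w"
      by (simp add: dist_norm norm_minus_commute)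
    then show ?thesis
      using Cons False by (simp add: polyline_length_Cons algebra_simps)
  qed simp
qed simp

lemma sorted_hd_le_le_last: "sorted ts \<Longrightarrow> t \<in> set ts \<Longrightarrow> hd ts \<le> t \<and> t \<le> last ts"
  by (induction ts) (auto simp: order_trans)

lemma partitions_subset: "ts \<in> partitions a b \<Longrightarrow> set ts \<subseteq> {a..b}"
  unfolding partitions_def using sorted_hd_le_le_last by fastforce

lemma curve_length_cong:
  "(\<And>t. a \<le> t \<Longrightarrow> t \<le> b \<Longrightarrow> g t = h t) \<Longrightarrow> curve_length g a b = curve_length h a b"
  unfolding curve_length_eq_SUP
  by (intro SUP_cong refl arg_cong[where f = ennreal] polyline_length_cong)
     (auto dest!: partitions_subset)

lemma dist_le_curve_length:
  assumes "a \<le> t" "t \<le> b"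
  shows "ennreal (dist (g a) (g t)) \<le> curve_length g a b"
proof -
  have "[a, t, b] \<in> partitions a b"
    using assms by (simp add: partitions_def)
  then show ?thesis
    unfolding curve_length_eq_SUP by (rule SUP_upper2) (simp add: polyline_length_nonneg)
qed

lemma curve_length_const: "curve_length (\<lambda>_. c) a b = 0"
proof -
  have "polyline_length (\<lambda>_. c) ts = 0" for ts
    by (induction "\<lambda>_::real. c" ts rule: polyline_length.induct) auto
  then show ?thesis
    by (auto simp: curve_length_eq_SUP intro!: antisym SUP_least)
qed

lemma curve_length_reflect: "curve_length (g \<circ> uminus) (-b) (-a) \<le> curve_length g a b"
  unfolding curve_length_eq_SUP
proof (rule SUP_least)
  fix ts assume "ts \<in> partitions (-b) (-a)"
  then have "rev (map uminus ts) \<in> partitions a b"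
    by (auto simp: partitions_def sorted_wrt_rev sorted_wrt_map hd_rev last_rev hd_map last_map)
  then show "ennreal (polyline_length (g \<circ> uminus) ts)
      \<le> (SUP ts \<in> partitions a b. ennreal (polyline_length g ts))"
    by (rule SUP_upper2) (simp add: polyline_length_rev polyline_length_map)
qed

lemma curve_length_shift: "curve_length (g \<circ> (\<lambda>t. t + h)) a b \<le> curve_length g (a + h) (b + h)"
  unfolding curve_length_eq_SUP
proof (rule SUP_least)
  fix ts assume "ts \<in> partitions a b"
  then have "map (\<lambda>t. t + h) ts \<in> partitions (a + h) (b + h)"
    by (auto simp: partitions_def sorted_wrt_map hd_map last_map)
  then show "ennreal (polyline_length (g \<circ> (\<lambda>t. t + h)) ts)
      \<le> (SUP ts \<in> partitions (a + h) (b + h). ennreal (polyline_length g ts))"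
    by (rule SUP_upper2) (simp add: polyline_length_map)
qed

lemma curve_length_linepath: "curve_length (linepath v w) 0 1 \<le> ennreal (dist v w)"
  unfolding curve_length_eq_SUP
  by (rule SUP_least) (simp add: partitions_def polyline_length_linepath)

lemma polyline_length_append_le:
  "ys \<noteq> [] \<Longrightarrow>
     polyline_length g (xs @ ys) \<le> polyline_length g (xs @ [b]) + polyline_length g (b # ys)"
  using dist_triangle[of "g (last xs)" "g (hd ys)" "g b"]
  by (auto simp: polyline_length_append polyline_length_Cons)

lemma partitions_split:
  assumes ts: "ts \<in> partitions a c" and "a \<le> b" "b \<le> c"
  obtains xs ys where "ts = xs @ ys" "ys \<noteq> []" "\<forall>x\<in>set xs. x < b" "\<forall>y\<in>set ys. b \<le> y"
    "xs @ [b] \<in> partitions a b" "b # ys \<in> partitions b c"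
proof
  define xs where "xs = takeWhile (\<lambda>t. t < b) ts"
  define ys where "ys = dropWhile (\<lambda>t. t < b) ts"
  show ts_eq: "ts = xs @ ys" and xs_less: "\<forall>x\<in>set xs. x < b"
    unfolding xs_def ys_def by (auto dest: set_takeWhileD)
  have "sorted (xs @ ys)"
    using ts ts_eq by (simp add: partitions_def)
  then have sorted: "sorted xs" "sorted ys"
    by (simp_all add: sorted_append)
  show "ys \<noteq> []"
  proof
    assume "ys = []"
    then have "c \<in> set xs"
      using ts ts_eq last_in_set unfolding partitions_def by fastforce
    then show False
      using xs_less assms(3) by auto
  qed
  then have b_le: "b \<le> hd ys"
    using hd_dropWhile[of "\<lambda>t. t < b" ts] unfolding ys_def by simp
  then show ys_ge: "\<forall>y\<in>set ys. b \<le> y"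
    using sorted_hd_le_le_last[OF sorted(2)] by fastforce
  show "xs @ [b] \<in> partitions a b"
    using ts ts_eq xs_less sorted(1) b_le assms(2)
    by (cases xs) (auto simp: partitions_def sorted_append)
  show "b # ys \<in> partitions b c"
    using ts ts_eq sorted(2) ys_ge \<open>ys \<noteq> []\<close> by (auto simp: partitions_def)
qed

lemma curve_length_join:
  assumes "a \<le> b" "b \<le> c" "g1 b = g2 b"
  shows "curve_length (\<lambda>t. if t \<le> b then g1 t else g2 t) a c
           \<le> curve_length g1 a b + curve_length g2 b c"
  unfolding curve_length_eq_SUP
proof (rule SUP_least)
  let ?g = "\<lambda>t. if t \<le> b then g1 t else g2 t"
  fix ts assume "ts \<in> partitions a c"
  then obtain xs ys where split: "ts = xs @ ys" "ys \<noteq> []" "\<forall>x\<in>set xs. x < b" "\<forall>y\<in>set ys. b \<le> y"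
    and parts: "xs @ [b] \<in> partitions a b" "b # ys \<in> partitions b c"
    using partitions_split assms(1,2) by metis
  have "polyline_length ?g (xs @ [b]) = polyline_length g1 (xs @ [b])"
    using split(3) by (intro polyline_length_cong) auto
  moreover have "polyline_length ?g (b # ys) = polyline_length g2 (b # ys)"
    using split(4) assms(3) by (intro polyline_length_cong) auto
  ultimately have "polyline_length ?g ts \<le> polyline_length g1 (xs @ [b]) + polyline_length g2 (b # ys)"
    using polyline_length_append_le[OF split(2), of ?g xs b] split(1) by simp
  then show "ennreal (polyline_length ?g ts)
      \<le> (SUP ts \<in> partitions a b. ennreal (polyline_length g1 ts))
        + (SUP ts \<in> partitions b c. ennreal (polyline_length g2 ts))"
    using parts by (intro order_trans[OF _ add_mono[OF SUP_upper SUP_upper]])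
       (auto simp: polyline_length_nonneg simp flip: ennreal_plus)
qed

lemma curve_length_join_shifted:
  assumes "a \<le> b" "c \<le> e" "g1 b = g2 c"
  shows "curve_length (\<lambda>t. if t \<le> b then g1 t else g2 (t + (c - b))) a (e - (c - b))
           \<le> curve_length g1 a b + curve_length g2 c e"
proof -
  have "curve_length (\<lambda>t. if t \<le> b then g1 t else g2 (t + (c - b))) a (e - (c - b))
           \<le> curve_length g1 a b + curve_length (g2 \<circ> (\<lambda>t. t + (c - b))) b (e - (c - b))"
    using curve_length_join[of a b "e - (c - b)" g1 "g2 \<circ> (\<lambda>t. t + (c - b))"] assms
    by (simp add: comp_def cong: if_cong)
  also have "\<dots> \<le> curve_length g1 a b + curve_length g2 c e"
    using curve_length_shift[of g2 "c - b" b "e - (c - b)"] by (intro add_left_mono) simp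
  finally show ?thesis .
qed

lemma continuous_map_join_shifted:
  fixes a b c e :: real
  assumes "a \<le> b" "c \<le> e" "continuous_map (top_of_set {a..b}) Y \<gamma>1"
    "continuous_map (top_of_set {c..e}) Y \<gamma>2" "\<gamma>1 b = \<gamma>2 c"
  shows "continuous_map (top_of_set {a..e - (c - b)}) Y (\<lambda>t. if t \<le> b then \<gamma>1 t else \<gamma>2 (t + (c - b)))"
proof -
  let ?S = "{a..e - (c - b)}"
  have "?S \<inter> {t \<in> ?S. t \<le> b} = {a..b}" "?S \<inter> {t \<in> ?S. b \<le> t} = {b..e - (c - b)}"
    using assms(1,2) by auto
  then have "subtopology (top_of_set ?S) {t \<in> topspace (top_of_set ?S). t \<le> b} = top_of_set {a..b}"
    "subtopology (top_of_set ?S) {t \<in> topspace (top_of_set ?S). b \<le> t} = top_of_set {b..e - (c - b)}"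
    by (simp_all add: subtopology_subtopology)
  moreover have "continuous_map (top_of_set {b..e - (c - b)}) Y (\<gamma>2 \<circ> (\<lambda>t. t + (c - b)))"
    by (rule continuous_map_compose[OF _ assms(4)]) (auto intro!: continuous_intros)
  ultimately show ?thesis
    using continuous_map_cases_le[where X = "top_of_set ?S" and p = "\<lambda>t. t" and q = "\<lambda>t. b"
        and f = \<gamma>1 and g = "\<gamma>2 \<circ> (\<lambda>t. t + (c - b))" and Y = Y] assms(3,5)
    by (simp add: continuous_on_id comp_def cong: if_cong)
qed

lemma connected_space_ennreal_distance_finite:
  fixes d :: "'a \<Rightarrow> 'a \<Rightarrow> ennreal"
  assumes T: "connected_space T" and self: "\<And>p. p \<in> topspace T \<Longrightarrow> d p p = 0"
    and commute: "\<And>p q. d p q = d q p" and triangle: "\<And>p q r. d p q \<le> d p r + d r q"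
    and near: "\<And>p e. p \<in> topspace T \<Longrightarrow> e > 0 \<Longrightarrow> \<exists>N. openin T N \<and> p \<in> N \<and> (\<forall>q\<in>N. d p q < ennreal e)"
    and "p \<in> topspace T" "q \<in> topspace T"
  shows "d p q < \<infinity>"
proof -
  have fin_iff: "d p q' < \<infinity> \<longleftrightarrow> d p q < \<infinity>" if "d q q' < \<infinity>" for q q'
    using triangle[of p q' q] triangle[of p q q'] that commute[of q q'] by (auto intro: le_less_trans)
  define S where "S = {q \<in> topspace T. d p q < \<infinity>}"
  have "S \<subseteq> topspace T" "p \<in> S"
    unfolding S_def using \<open>p \<in> topspace T\<close> self by auto
  have nbhd: "\<exists>N. openin T N \<and> q \<in> N \<and> (N \<subseteq> S \<longleftrightarrow> q \<in> S) \<and> (N \<inter> S = {} \<longleftrightarrow> q \<notin> S)"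
    if q: "q \<in> topspace T" for q
  proof -
    obtain N where N: "openin T N" "q \<in> N" "\<forall>q'\<in>N. d q q' < ennreal 1"
      using near[OF q zero_less_one] by blast
    then have "\<forall>q'\<in>N. d q q' < \<infinity>"
      by (auto simp: less_top[symmetric])
    then have "q' \<in> S \<longleftrightarrow> q \<in> S" if "q' \<in> N" for q'
      using openin_subset[OF N(1)] q fin_iff that unfolding S_def by blast
    then show ?thesis
      using N(1,2) by blast
  qed
  have "openin T S"
  proof (subst openin_subopen, intro ballI)
    fix q assume "q \<in> S"
    then show "\<exists>N. openin T N \<and> q \<in> N \<and> N \<subseteq> S"
      using nbhd[of q] \<open>S \<subseteq> topspace T\<close> by blast
  qed
  moreover have "openin T (topspace T - S)"
  proof (subst openin_subopen, intro ballI)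
    fix q assume "q \<in> topspace T - S"
    then show "\<exists>N. openin T N \<and> q \<in> N \<and> N \<subseteq> topspace T - S"
      using nbhd[of q] openin_subset by blast
  qed
  ultimately have "S = topspace T"
    using T \<open>S \<subseteq> topspace T\<close> \<open>p \<in> S\<close> unfolding connected_space_clopen_in closedin_def by blast
  then show ?thesis
    using \<open>q \<in> topspace T\<close> unfolding S_def by blast
qed

lemma Metric_space_enn2real:
  fixes d :: "'a \<Rightarrow> 'a \<Rightarrow> ennreal"
  assumes fin: "\<And>p q. p \<in> M \<Longrightarrow> q \<in> M \<Longrightarrow> d p q < \<infinity>"
    and zero: "\<And>p q. p \<in> M \<Longrightarrow> q \<in> M \<Longrightarrow> d p q = 0 \<longleftrightarrow> p = q"
    and commute: "\<And>p q. d p q = d q p" and triangle: "\<And>p q r. d p q \<le> d p r + d r q"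
  shows "Metric_space M (\<lambda>p q. enn2real (d p q))"
proof
  fix p q r assume "p \<in> M" "q \<in> M"
  then show "enn2real (d p q) = 0 \<longleftrightarrow> p = q"
    using fin[of p q] zero[of p q] by (auto simp: enn2real_eq_0_iff)
  assume "r \<in> M"
  have "enn2real (d p r) \<le> enn2real (d p q + d q r)"
    using fin \<open>p \<in> M\<close> \<open>q \<in> M\<close> \<open>r \<in> M\<close> by (intro enn2real_mono triangle) auto
  also have "\<dots> = enn2real (d p q) + enn2real (d q r)"
    using fin \<open>p \<in> M\<close> \<open>q \<in> M\<close> \<open>r \<in> M\<close> by (intro enn2real_plus) auto
  finally show "enn2real (d p r) \<le> enn2real (d p q) + enn2real (d q r)" .
qed (use commute in auto)

lemma mtopology_enn2real_eq:
  fixes d :: "'a \<Rightarrow> 'a \<Rightarrow> ennreal"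
  assumes "Metric_space (topspace T) (\<lambda>p q. enn2real (d p q))"
    and fin: "\<And>p q. p \<in> topspace T \<Longrightarrow> q \<in> topspace T \<Longrightarrow> d p q < \<infinity>"
    and near: "\<And>p e. p \<in> topspace T \<Longrightarrow> e > 0 \<Longrightarrow> \<exists>N. openin T N \<and> p \<in> N \<and> (\<forall>q\<in>N. d p q < ennreal e)"
    and sep: "\<And>W p. openin T W \<Longrightarrow> p \<in> W \<Longrightarrow> \<exists>r>0. \<forall>q. d p q < ennreal r \<longrightarrow> q \<in> W"
  shows "Metric_space.mtopology (topspace T) (\<lambda>p q. enn2real (d p q)) = T"
proof -
  interpret Metric_space "topspace T" "\<lambda>p q. enn2real (d p q)"
    by fact
  have mball_eq: "mball p r = {q \<in> topspace T. d p q < ennreal r}" if "p \<in> topspace T" for p r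
    using fin that by auto
  show ?thesis
    unfolding topology_eq
  proof (intro allI iffI)
    fix S assume S: "openin mtopology S"
    show "openin T S"
    proof (subst openin_subopen, intro ballI)
      fix p assume "p \<in> S"
      then obtain r where "r > 0" "mball p r \<subseteq> S" "p \<in> topspace T"
        using S openin_mtopology by blast
      moreover obtain N where "openin T N" "p \<in> N" "\<forall>q\<in>N. d p q < ennreal r"
        using near[OF \<open>p \<in> topspace T\<close> \<open>r > 0\<close>] by blast
      moreover have "N \<subseteq> topspace T"
        using \<open>openin T N\<close> by (rule openin_subset)
      ultimately show "\<exists>N. openin T N \<and> p \<in> N \<and> N \<subseteq> S"
        using mball_eq[of p r] by blast
    qed
  next
    fix S assume S: "openin T S"
    have "\<exists>r>0. mball p r \<subseteq> S" if p: "p \<in> S" for p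
    proof -
      obtain r where "r > 0" "\<forall>q. d p q < ennreal r \<longrightarrow> q \<in> S"
        using sep[OF S p] by blast
      moreover have "p \<in> topspace T"
        using openin_subset[OF S] p by blast
      ultimately show ?thesis
        using mball_eq[of p r] by blast
    qed
    then show "openin mtopology S"
      unfolding openin_mtopology using openin_subset[OF S] by blast
  qed
qed

lemma ennreal_distance_metrizes:
  fixes d :: "'a \<Rightarrow> 'a \<Rightarrow> ennreal"
  assumes T: "connected_space T" "t1_space T" and self: "\<And>p. p \<in> topspace T \<Longrightarrow> d p p = 0"
    and commute: "\<And>p q. d p q = d q p" and triangle: "\<And>p q r. d p q \<le> d p r + d r q"
    and near: "\<And>p e. p \<in> topspace T \<Longrightarrow> e > 0 \<Longrightarrow> \<exists>N. openin T N \<and> p \<in> N \<and> (\<forall>q\<in>N. d p q < ennreal e)"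
    and sep: "\<And>W p. openin T W \<Longrightarrow> p \<in> W \<Longrightarrow> \<exists>r>0. \<forall>q. d p q < ennreal r \<longrightarrow> q \<in> W"
  shows "(\<forall>p\<in>topspace T. \<forall>q\<in>topspace T. d p q < \<infinity>)
    \<and> Metric_space (topspace T) (\<lambda>p q. enn2real (d p q))
    \<and> Metric_space.mtopology (topspace T) (\<lambda>p q. enn2real (d p q)) = T"
proof -
  have fin: "d p q < \<infinity>" if "p \<in> topspace T" "q \<in> topspace T" for p q
    using connected_space_ennreal_distance_finite[OF T(1) self commute triangle near that] .
  have zero: "d p q = 0 \<longleftrightarrow> p = q" if "p \<in> topspace T" "q \<in> topspace T" for p q
  proof
    assume "d p q = 0"
    have "openin T (topspace T - {q})"
      using T(2) that(2) by (simp add: openin_diff t1_space_closedin_singleton)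
    then show "p = q"
      using sep[of "topspace T - {q}" p] \<open>d p q = 0\<close> that(1) by force
  qed (use self that in simp)
  have metric: "Metric_space (topspace T) (\<lambda>p q. enn2real (d p q))"
    by (rule Metric_space_enn2real[OF fin zero commute triangle])
  have "Metric_space.mtopology (topspace T) (\<lambda>p q. enn2real (d p q)) = T"
    by (rule mtopology_enn2real_eq[OF metric fin near sep])
  with fin metric show ?thesis
    by blast
qed

lemma connectedin_subset_openin:
  assumes "connectedin X K" "openin X D" "D \<inter> K \<noteq> {}"
    and "\<And>k. k \<in> K - D \<Longrightarrow> \<exists>V. openin X V \<and> k \<in> V \<and> V \<inter> K \<inter> D = {}"
  shows "K \<subseteq> D"
proof -
  define E where "E = \<Union>{V. openin X V \<and> V \<inter> K \<inter> D = {}}"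
  have "openin X E" "K \<subseteq> D \<union> E" "D \<inter> E \<inter> K = {}"
    using assms(4) unfolding E_def by blast+
  then have "E \<inter> K = {}"
    using assms(1-3) unfolding connectedin by blast
  then show ?thesis
    using \<open>K \<subseteq> D \<union> E\<close> by blast
qed

lemma connectedin_subset_of_separation:
  assumes "connectedin X L" "openin X G" "openin X H" "disjnt G H" "L \<subseteq> G \<union> H" "s \<in> L" "s \<in> G"
  shows "L \<subseteq> G"
proof -
  have "L \<subseteq> G \<or> L \<subseteq> H"
    using assms(1-5) by (simp add: connectedin_subset_separated_union separatedin_open_sets)
  then show ?thesis
    using assms(4,6,7) unfolding disjnt_def by blast
qed

section \<open>The quotient \<open>X\<^sub>f\<close>\<close>

lemma openin_Xf_topology:
  "openin (Xf_topology X f) U \<longleftrightarrow> U \<subseteq> Xf X f \<and> openin X {x \<in> topspace X. fclass X f x \<in> U}"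
proof -
  have "istopology (\<lambda>U. U \<subseteq> Xf X f \<and> openin X {x \<in> topspace X. fclass X f x \<in> U})"
    unfolding istopology_def
  proof (rule conjI; intro allI impI)
    fix S T assume "S \<subseteq> Xf X f \<and> openin X {x \<in> topspace X. fclass X f x \<in> S}"
      "T \<subseteq> Xf X f \<and> openin X {x \<in> topspace X. fclass X f x \<in> T}"
    moreover have "{x \<in> topspace X. fclass X f x \<in> S \<inter> T} =
        {x \<in> topspace X. fclass X f x \<in> S} \<inter> {x \<in> topspace X. fclass X f x \<in> T}"
      by auto
    ultimately show "S \<inter> T \<subseteq> Xf X f \<and> openin X {x \<in> topspace X. fclass X f x \<in> S \<inter> T}"
      by auto
  next
    fix \<K> assume \<K>: "\<forall>S\<in>\<K>. S \<subseteq> Xf X f \<and> openin X {x \<in> topspace X. fclass X f x \<in> S}"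
    have "{x \<in> topspace X. fclass X f x \<in> \<Union>\<K>} = (\<Union>S\<in>\<K>. {x \<in> topspace X. fclass X f x \<in> S})"
      by auto
    then show "\<Union>\<K> \<subseteq> Xf X f \<and> openin X {x \<in> topspace X. fclass X f x \<in> \<Union>\<K>}"
      using \<K> by auto
  qed
  then show ?thesis
    unfolding Xf_topology_def by simp
qed

lemma topspace_Xf_topology [simp]: "topspace (Xf_topology X f) = Xf X f"
proof (rule antisym)
  show "topspace (Xf_topology X f) \<subseteq> Xf X f"
    using openin_Xf_topology[of X f "topspace (Xf_topology X f)"] by simp
  have "{x \<in> topspace X. fclass X f x \<in> Xf X f} = topspace X"
    by (auto simp: Xf_def)
  then show "Xf X f \<subseteq> topspace (Xf_topology X f)"
    by (intro openin_subset) (simp add: openin_Xf_topology)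
qed

lemma fclass_memD: "y \<in> fclass X f x \<Longrightarrow> y \<in> topspace X \<and> f y = f x"
  unfolding fclass_def fiber_def
  using connected_component_of_subset_topspace by fastforce

lemma fclass_subset_fiber: "fclass X f x \<subseteq> fiber X f x"
  unfolding fiber_def using fclass_memD by fastforce

lemma fclass_self: "x \<in> topspace X \<Longrightarrow> x \<in> fclass X f x"
  unfolding fclass_def by (simp add: connected_component_of_refl fiber_def)

lemma fiber_eq: "f y = f x \<Longrightarrow> fiber X f y = fiber X f x"
  unfolding fiber_def by auto

lemma fclass_eq:
  assumes "y \<in> fclass X f x"
  shows "fclass X f y = fclass X f x"
proof -
  have "connected_component_of (subtopology X (fiber X f x)) x y"
    using assms unfolding fclass_def by simp
  then have "connected_component_of (subtopology X (fiber X f x)) y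
      = connected_component_of (subtopology X (fiber X f x)) x"
    using connected_component_of_equiv by metis
  then show ?thesis
    unfolding fclass_def using fiber_eq[of f y x X] fclass_memD[OF assms] by simp
qed

lemma fclass_in_connected_components:
  "x \<in> topspace X \<Longrightarrow> fclass X f x \<in> connected_components_of (subtopology X (fiber X f x))"
  unfolding fclass_def by (simp add: connected_component_in_connected_components_of fiber_def)

lemma connectedin_fclass: "connectedin X (fclass X f x)"
  unfolding fclass_def using connectedin_connected_component_of connectedin_subtopology by metis

lemma ftilde_fclass: "x \<in> topspace X \<Longrightarrow> ftilde f (fclass X f x) = f x"
  unfolding ftilde_def using someI[of "\<lambda>y. y \<in> fclass X f x"] fclass_self fclass_memD by metis

lemma continuous_map_fclass: "continuous_map X (Xf_topology X f) (fclass X f)"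
  unfolding continuous_map_def openin_Xf_topology by (auto simp: Xf_def)

lemma continuous_map_ftilde:
  assumes "continuous_map X euclidean f"
  shows "continuous_map (Xf_topology X f) euclidean (ftilde f)"
  unfolding continuous_map_def
proof (intro conjI allI impI)
  fix G :: "'b set" assume "openin euclidean G"
  moreover have "{x \<in> topspace X. fclass X f x \<in> {c \<in> Xf X f. ftilde f c \<in> G}}
      = {x \<in> topspace X. f x \<in> G}"
    by (auto simp: ftilde_fclass Xf_def)
  ultimately show "openin (Xf_topology X f) {c \<in> topspace (Xf_topology X f). ftilde f c \<in> G}"
    using openin_continuous_map_preimage[OF assms] by (simp add: openin_Xf_topology)
qed simp

lemma connected_space_Xf_topology:
  assumes "connected_space X"
  shows "connected_space (Xf_topology X f)"
proof -
  have "connectedin (Xf_topology X f) (fclass X f ` topspace X)"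
    using assms
    by (intro connectedin_continuous_map_image[OF continuous_map_fclass]) (simp add: connectedin_topspace)
  then show ?thesis
    by (metis Xf_def topspace_Xf_topology connectedin_topspace)
qed

lemma LFC_fclass_eq:
  assumes "LFC X f U" "U \<subseteq> topspace X" "u \<in> U" "u' \<in> U" "f u = f u'"
  shows "fclass X f u = fclass X f u'"
proof (rule ccontr)
  assume "fclass X f u \<noteq> fclass X f u'"
  moreover have "fclass X f u' \<in> connected_components_of (subtopology X (fiber X f u))"
    using fclass_in_connected_components[of u' X f] fiber_eq[of f u' u X] assms by auto
  ultimately show False
    using assms fclass_in_connected_components[of u X f] fclass_self[of _ X f]
    unfolding LFC_def by blast
qed

section \<open>Convexity charts\<close>

definition convexity_chart ::
    "'a topology \<Rightarrow> ('a \<Rightarrow> 'b::real_normed_vector) \<Rightarrow> 'a \<Rightarrow> 'a set \<Rightarrow> 'b set \<Rightarrow> bool" where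
  "convexity_chart X f x U C \<longleftrightarrow> openin X U \<and> x \<in> U \<and> convex C \<and> f ` U \<subseteq> C \<and>
     open_map (subtopology X U) (top_of_set C) f \<and>
     (\<forall>U'. U' \<subseteq> U \<and> nbhd_in X U' x \<longrightarrow> nbhd_in (top_of_set C) (f ` U') (f x)) \<and> LFC X f U"

lemma convexity_chart_exists:
  assumes lcd: "local_convexity_data X f" and lfc: "locally_fiber_connected X f"
    and "openin X W" "x \<in> W"
  obtains U C where "U \<subseteq> W" "convexity_chart X f x U C"
proof -
  have x: "x \<in> topspace X"
    using assms openin_subset by blast
  obtain W' where W': "openin X W'" "x \<in> W'"
    and cone: "\<And>U. openin X U \<Longrightarrow> x \<in> U \<Longrightarrow> U \<subseteq> W' \<Longrightarrow> \<exists>C. convex_cone_with_vertex C (f x) \<and>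
       f ` U \<subseteq> C \<and> nbhd_in (top_of_set C) (f ` U) (f x) \<and> open_map (subtopology X U) (top_of_set C) f \<and>
       (\<forall>U'. U' \<subseteq> U \<and> nbhd_in X U' x \<longrightarrow> nbhd_in (top_of_set C) (f ` U') (f x))"
    using lcd x unfolding local_convexity_data_def by metis
  obtain U0 where U0: "U0 \<subseteq> W' \<inter> W" "nbhd_in X U0 x" "LFC X f U0"
    using lfc x W' assms(3,4) unfolding locally_fiber_connected_def by (meson IntI openin_Int)
  then obtain U where U: "openin X U" "x \<in> U" "U \<subseteq> U0"
    unfolding nbhd_in_def by blast
  then obtain C where "convex_cone_with_vertex C (f x)" "f ` U \<subseteq> C"
      "open_map (subtopology X U) (top_of_set C) f"
      "\<forall>U'. U' \<subseteq> U \<and> nbhd_in X U' x \<longrightarrow> nbhd_in (top_of_set C) (f ` U') (f x)"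
    using cone[of U] U0(1) by blast
  moreover have "LFC X f U"
    using U0(3) U(3) unfolding LFC_def by blast
  ultimately have "convexity_chart X f x U C"
    using U unfolding convexity_chart_def convex_cone_with_vertex_def by blast
  then show thesis
    using U0(1) U(3) that by blast
qed

lemma convexity_chart_fclass_eq:
  "convexity_chart X f x U C \<Longrightarrow> u \<in> U \<Longrightarrow> u' \<in> U \<Longrightarrow> f u = f u' \<Longrightarrow> fclass X f u = fclass X f u'"
  unfolding convexity_chart_def by (metis LFC_fclass_eq openin_subset)

lemma convexity_chart_openin_image:
  assumes "convexity_chart X f x U C" "openin X N" "N \<subseteq> U"
  shows "openin (top_of_set C) (f ` N)"
proof -
  have "openin (subtopology X U) N"
    using assms(2,3) unfolding openin_subtopology by blast
  then show ?thesis
    using assms(1) unfolding convexity_chart_def open_map_def by blast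
qed

lemma convexity_chart_openin_same_image:
  assumes contf: "continuous_map X euclidean f" and chart: "convexity_chart X f x U C"
    and "openin X G"
  shows "openin X {z \<in> U. f z \<in> f ` (U \<inter> G)}"
proof -
  have U: "openin X U" "f ` U \<subseteq> C"
    using chart unfolding convexity_chart_def by auto
  obtain H where "open H" "f ` (U \<inter> G) = C \<inter> H"
    using convexity_chart_openin_image[OF chart, of "U \<inter> G"] U assms(3)
    by (auto simp: openin_open)
  then have "{z \<in> U. f z \<in> f ` (U \<inter> G)} = U \<inter> {z \<in> topspace X. f z \<in> H}"
    using U openin_subset by fastforce
  then show ?thesis
    using U \<open>open H\<close> by (simp add: openin_Int openin_continuous_map_preimage[OF contf])
qed

lemma convexity_chart_nbhd:
  assumes "convexity_chart X f x U C" "openin X N" "x \<in> N" "N \<subseteq> U"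
  shows "nbhd_in (top_of_set C) (f ` N) (f x)"
  using assms unfolding convexity_chart_def nbhd_in_def by blast

lemma nbhd_in_top_of_set_ball:
  fixes v :: "'b::metric_space"
  assumes "nbhd_in (top_of_set C) S v"
  obtains r where "r > 0" "C \<inter> ball v r \<subseteq> S"
proof -
  obtain G where "openin (top_of_set C) G" "v \<in> G" "G \<subseteq> S"
    using assms unfolding nbhd_in_def by blast
  then obtain H where "open H" "G = C \<inter> H" "v \<in> H"
    unfolding openin_open by blast
  then obtain r where "r > 0" "ball v r \<subseteq> H"
    using open_contains_ball by blast
  then show thesis
    using that \<open>G = C \<inter> H\<close> \<open>G \<subseteq> S\<close> by blast
qed

lemma convexity_chart_interior_of_saturated:
  assumes contf: "continuous_map X euclidean f" and chart: "convexity_chart X f k V C"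
    and saturated: "\<forall>y\<in>S. \<forall>z\<in>topspace X. fclass X f z = fclass X f y \<longrightarrow> z \<in> S"
    and k': "k' \<in> V" "k' \<in> X interior_of S" "f k' = f k"
  shows "k \<in> X interior_of S"
proof -
  define M where "M = {z \<in> V. f z \<in> f ` (V \<inter> X interior_of S)}"
  have V: "openin X V" "k \<in> V"
    using chart unfolding convexity_chart_def by blast+
  have "openin X M"
    unfolding M_def by (rule convexity_chart_openin_same_image[OF contf chart]) simp
  moreover have "f k \<in> f ` (V \<inter> X interior_of S)"
    using k' by (metis IntI image_eqI)
  then have "k \<in> M"
    using V(2) unfolding M_def by blast
  moreover have "M \<subseteq> S"
  proof
    fix z assume "z \<in> M"
    then obtain n where n: "z \<in> V" "n \<in> V" "n \<in> X interior_of S" "f z = f n"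
      unfolding M_def by blast
    then have "fclass X f z = fclass X f n"
      using convexity_chart_fclass_eq[OF chart] by blast
    moreover have "z \<in> topspace X"
      using n(1) openin_subset[OF V(1)] by blast
    moreover have "n \<in> S"
      using interior_of_subset n(3) by (rule subsetD)
    ultimately show "z \<in> S"
      using saturated by blast
  qed
  ultimately show ?thesis
    by (meson interior_of_maximal subsetD)
qed

lemma openin_fclass_saturation:
  assumes contf: "continuous_map X euclidean f" and lcd: "local_convexity_data X f"
    and lfc: "locally_fiber_connected X f" and U: "openin X U"
  shows "openin X {y \<in> topspace X. fclass X f y \<in> fclass X f ` U}"
proof -
  define S where "S = {y \<in> topspace X. fclass X f y \<in> fclass X f ` U}"
  have saturated: "\<forall>y\<in>S. \<forall>z\<in>topspace X. fclass X f z = fclass X f y \<longrightarrow> z \<in> S"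
    unfolding S_def by simp
  have "U \<subseteq> X interior_of S"
    using U openin_subset[OF U] unfolding S_def by (intro interior_of_maximal) blast+
  have "fclass X f u \<subseteq> X interior_of S" if u: "u \<in> U" for u
  proof (rule connectedin_subset_openin[OF connectedin_fclass openin_interior_of])
    have "u \<in> fclass X f u"
      using fclass_self openin_subset[OF U] u by (metis subsetD)
    then show "X interior_of S \<inter> fclass X f u \<noteq> {}"
      using u \<open>U \<subseteq> X interior_of S\<close> by blast
    fix k assume k: "k \<in> fclass X f u - X interior_of S"
    then have "k \<in> topspace X"
      using fclass_memD[of k X f u] by blast
    then obtain V C where chart: "convexity_chart X f k V C"
      using convexity_chart_exists[OF lcd lfc openin_topspace] by metis
    have "f k' = f k" if "k' \<in> fclass X f u" for k'
      using fclass_memD[of k X f u] fclass_memD[of k' X f u] k that by simp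
    then have "V \<inter> fclass X f u \<inter> X interior_of S = {}"
      using convexity_chart_interior_of_saturated[OF contf chart saturated] k by blast
    then show "\<exists>V. openin X V \<and> k \<in> V \<and> V \<inter> fclass X f u \<inter> X interior_of S = {}"
      using chart unfolding convexity_chart_def by blast
  qed
  have "S \<subseteq> X interior_of S"
  proof
    fix y assume "y \<in> S"
    then obtain u where "u \<in> U" "fclass X f y = fclass X f u" "y \<in> topspace X"
      unfolding S_def by blast
    then show "y \<in> X interior_of S"
      using fclass_self[of y X f] \<open>\<And>u. u \<in> U \<Longrightarrow> fclass X f u \<subseteq> X interior_of S\<close> by auto
  qed
  then have "S = X interior_of S"
    by (rule subset_antisym[OF _ interior_of_subset])
  then have "openin X S"
    by (metis openin_interior_of)
  then show ?thesis
    unfolding S_def .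
qed

lemma open_map_fclass:
  assumes "continuous_map X euclidean f" "local_convexity_data X f" "locally_fiber_connected X f"
  shows "open_map X (Xf_topology X f) (fclass X f)"
  unfolding open_map_def openin_Xf_topology
proof (intro allI impI conjI)
  fix U assume "openin X U"
  then show "fclass X f ` U \<subseteq> Xf X f"
    using openin_subset unfolding Xf_def by blast
  show "openin X {y \<in> topspace X. fclass X f y \<in> fclass X f ` U}"
    using openin_fclass_saturation[OF assms \<open>openin X U\<close>] .
qed

text \<open>By (LFC) the class of the chosen point does not depend on the choice.\<close>

definition chart_section :: "'a topology \<Rightarrow> ('a \<Rightarrow> 'b) \<Rightarrow> 'a set \<Rightarrow> 'b \<Rightarrow> 'a set" where
  "chart_section X f U y = fclass X f (SOME u. u \<in> U \<and> f u = y)"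

lemma chart_section_eq:
  assumes chart: "convexity_chart X f x U C" and u: "u \<in> U"
  shows "chart_section X f U (f u) = fclass X f u"
proof -
  define u' where "u' = (SOME u'. u' \<in> U \<and> f u' = f u)"
  have "u' \<in> U \<and> f u' = f u"
    unfolding u'_def by (rule someI[of _ u]) (simp add: u)
  then show ?thesis
    unfolding chart_section_def u'_def[symmetric] using convexity_chart_fclass_eq[OF chart _ u] by simp
qed

lemma ftilde_chart_section:
  assumes chart: "convexity_chart X f x U C" and "y \<in> f ` U"
  shows "ftilde f (chart_section X f U y) = y"
proof -
  obtain u where "u \<in> U" "y = f u"
    using assms(2) by blast
  moreover have "u \<in> topspace X"
    using \<open>u \<in> U\<close> chart openin_subset unfolding convexity_chart_def by blast
  ultimately show ?thesis
    using chart_section_eq[OF chart] ftilde_fclass by metis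
qed

lemma continuous_map_chart_section:
  assumes chart: "convexity_chart X f x U C"
  shows "continuous_map (top_of_set (f ` U)) (Xf_topology X f) (chart_section X f U)"
  unfolding continuous_map_def
proof (intro conjI allI impI)
  have U: "openin X U" "f ` U \<subseteq> C"
    using chart unfolding convexity_chart_def by blast+
  show "chart_section X f U \<in> topspace (top_of_set (f ` U)) \<rightarrow> topspace (Xf_topology X f)"
    using chart_section_eq[OF chart] openin_subset[OF U(1)] by (auto simp: Xf_def)
  fix W assume W: "openin (Xf_topology X f) W"
  define V where "V = U \<inter> {z \<in> topspace X. fclass X f z \<in> W}"
  have "openin X V"
    unfolding V_def using U(1) W by (auto simp: openin_Xf_topology)
  have "{y \<in> topspace (top_of_set (f ` U)). chart_section X f U y \<in> W} = f ` V"
    unfolding V_def using chart_section_eq[OF chart] openin_subset[OF U(1)] by auto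
  moreover have "openin (top_of_set C) (f ` V)"
    using convexity_chart_openin_image[OF chart \<open>openin X V\<close>] V_def by blast
  ultimately show
    "openin (top_of_set (f ` U)) {y \<in> topspace (top_of_set (f ` U)). chart_section X f U y \<in> W}"
    using U(2) unfolding V_def by (auto intro: openin_subset_trans)
qed

lemma closedin_fclass_image_chart:
  assumes HXf: "Hausdorff_space (Xf_topology X f)" and contf: "continuous_map X euclidean f"
    and chart: "convexity_chart X f x U C"
  shows "closedin (subtopology (Xf_topology X f) {c \<in> Xf X f. ftilde f c \<in> f ` U}) (fclass X f ` U)"
proof -
  define P where "P = {c \<in> Xf X f. ftilde f c \<in> f ` U}"
  have UX: "U \<subseteq> topspace X"
    using chart openin_subset unfolding convexity_chart_def by blast
  have P: "topspace (subtopology (Xf_topology X f) P) = P"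
    unfolding P_def by auto
  have "continuous_map (subtopology (Xf_topology X f) P) (top_of_set (f ` U)) (ftilde f)"
    using continuous_map_ftilde[OF contf]
    by (auto simp: P_def continuous_map_in_subtopology continuous_map_from_subtopology)
  then have "continuous_map (subtopology (Xf_topology X f) P) (Xf_topology X f)
      (chart_section X f U \<circ> ftilde f)"
    using continuous_map_chart_section[OF chart] by (rule continuous_map_compose)
  then have "closedin (subtopology (Xf_topology X f) P)
      {c \<in> topspace (subtopology (Xf_topology X f) P). (chart_section X f U \<circ> ftilde f) c = id c}"
    using HXf continuous_map_from_subtopology[OF continuous_map_id]
    by (intro closedin_continuous_maps_eq)
  then have "closedin (subtopology (Xf_topology X f) P) {c \<in> P. chart_section X f U (ftilde f c) = c}"
    unfolding P by simp
  moreover have "{c \<in> P. chart_section X f U (ftilde f c) = c} = fclass X f ` U"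
  proof (intro equalityI subsetI)
    fix c assume "c \<in> {c \<in> P. chart_section X f U (ftilde f c) = c}"
    then obtain u where "u \<in> U" "ftilde f c = f u" "c = chart_section X f U (f u)"
      unfolding P_def by auto
    then show "c \<in> fclass X f ` U"
      using chart_section_eq[OF chart] by auto
  next
    fix c assume "c \<in> fclass X f ` U"
    then obtain u where "u \<in> U" "c = fclass X f u"
      by blast
    moreover have "fclass X f u \<in> Xf X f"
      using UX \<open>u \<in> U\<close> unfolding Xf_def by blast
    ultimately show "c \<in> {c \<in> P. chart_section X f U (ftilde f c) = c}"
      using UX chart_section_eq[OF chart] ftilde_fclass[of u X f] unfolding P_def by auto
  qed
  ultimately show ?thesis
    unfolding P_def by simp
qed

section \<open>Separation in \<open>X\<^sub>f\<close>\<close>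

lemma closedin_fiber:
  fixes f :: "'a \<Rightarrow> 'b::t1_space"
  assumes "continuous_map X euclidean f"
  shows "closedin X (fiber X f x)"
proof -
  have "fiber X f x = {y \<in> topspace X. f y \<in> {f x}}"
    unfolding fiber_def by auto
  then show ?thesis
    using closedin_continuous_map_preimage[OF assms, of "{f x}"] by simp
qed

lemma closedin_fclass:
  fixes f :: "'a \<Rightarrow> 'b::t1_space"
  assumes "continuous_map X euclidean f" "x \<in> topspace X"
  shows "closedin X (fclass X f x)"
  using closedin_connected_components_of[OF fclass_in_connected_components[OF assms(2)]]
    closedin_fiber[OF assms(1)] by (rule closedin_trans_full)

lemma openin_fiber_fclass:
  assumes lfc: "locally_fiber_connected X f" and x: "x \<in> topspace X"
  shows "openin (subtopology X (fiber X f x)) (fclass X f x)"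
proof (subst openin_subopen, intro ballI)
  fix k assume k: "k \<in> fclass X f x"
  then have kX: "k \<in> topspace X" and fk: "f k = f x"
    using fclass_memD[OF k] by simp_all
  obtain U where U: "U \<subseteq> topspace X" "nbhd_in X U k" "LFC X f U"
    using lfc kX unfolding locally_fiber_connected_def by (metis openin_topspace)
  then obtain G where G: "openin X G" "k \<in> G" "G \<subseteq> U"
    unfolding nbhd_in_def by blast
  have "G \<inter> fiber X f x \<subseteq> fclass X f x"
  proof
    fix w assume w: "w \<in> G \<inter> fiber X f x"
    then have "w \<in> U" "w \<in> topspace X" "f w = f k"
      using G(3) fk unfolding fiber_def by auto
    then have "fclass X f w = fclass X f k"
      using LFC_fclass_eq[OF U(3,1)] G by blast
    then show "w \<in> fclass X f x"
      using fclass_eq[OF k] fclass_self[of w X f] \<open>w \<in> topspace X\<close> by simp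
  qed
  moreover have "openin (subtopology X (fiber X f x)) (G \<inter> fiber X f x)"
    using G(1) by (rule openin_subtopology_Int)
  moreover have "k \<in> G \<inter> fiber X f x"
    using G(2) kX fk unfolding fiber_def by simp
  ultimately show "\<exists>T. openin (subtopology X (fiber X f x)) T \<and> k \<in> T \<and> T \<subseteq> fclass X f x"
    by (intro exI conjI)
qed

lemma closedin_fiber_diff_fclass:
  fixes f :: "'a \<Rightarrow> 'b::t1_space"
  assumes "continuous_map X euclidean f" "locally_fiber_connected X f" "x \<in> topspace X"
  shows "closedin X (fiber X f x - fclass X f x)"
proof (rule closedin_trans_full[OF _ closedin_fiber[OF assms(1)]])
  have "fclass X f x \<subseteq> fiber X f x"
    by (rule fclass_subset_fiber)
  moreover have "topspace (subtopology X (fiber X f x)) = fiber X f x"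
    unfolding fiber_def by auto
  ultimately show "closedin (subtopology X (fiber X f x)) (fiber X f x - fclass X f x)"
    using openin_fiber_fclass[OF assms(2,3)] by (simp add: closedin_def double_diff)
qed

lemma closed_map_openin_fibers_within:
  assumes contf: "continuous_map X euclidean f" and clf: "closed_map X euclidean f"
    and "openin X W"
  shows "openin X {z \<in> topspace X. fiber X f z \<subseteq> W}"
proof -
  have "closedin X (topspace X - W)"
    using assms(3) by (simp add: closedin_diff)
  then have "closedin euclidean (f ` (topspace X - W))"
    using clf unfolding closed_map_def by blast
  then have "openin euclidean (- f ` (topspace X - W))"
    by (simp add: closed_closedin[symmetric] open_openin[symmetric] open_Compl)
  moreover have "{z \<in> topspace X. fiber X f z \<subseteq> W} = {z \<in> topspace X. f z \<in> - f ` (topspace X - W)}"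
    unfolding fiber_def by auto (metis DiffI image_eqI)
  ultimately show ?thesis
    using openin_continuous_map_preimage[OF contf] by metis
qed

lemma fclass_separated_by_values:
  fixes f :: "'a \<Rightarrow> 'b::t2_space"
  assumes contf: "continuous_map X euclidean f" and "x \<in> topspace X" "y \<in> topspace X" "f x \<noteq> f y"
  shows "\<exists>U V. openin (Xf_topology X f) U \<and> openin (Xf_topology X f) V \<and>
           fclass X f x \<in> U \<and> fclass X f y \<in> V \<and> disjnt U V"
proof -
  obtain G H where GH: "open G" "open H" "f x \<in> G" "f y \<in> H" "G \<inter> H = {}"
    using separation_t2[of "f x" "f y"] assms(4) by blast
  define pre where "pre G = {c \<in> Xf X f. ftilde f c \<in> G}" for G
  have "openin (Xf_topology X f) (pre G)" "openin (Xf_topology X f) (pre H)"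
    using openin_continuous_map_preimage[OF continuous_map_ftilde[OF contf]] GH(1,2)
    unfolding pre_def by simp_all
  moreover have "fclass X f x \<in> pre G" "fclass X f y \<in> pre H"
    using assms(2,3) GH(3,4) unfolding pre_def by (simp_all add: ftilde_fclass Xf_def)
  moreover have "disjnt (pre G) (pre H)"
    using GH(5) unfolding pre_def disjnt_def by blast
  ultimately show ?thesis
    by blast
qed

lemma fclass_separated_in_fiber:
  fixes f :: "'a \<Rightarrow> 'b::real_normed_vector"
  assumes NX: "normal_space X" and contf: "continuous_map X euclidean f"
    and clf: "closed_map X euclidean f" and lcd: "local_convexity_data X f"
    and lfc: "locally_fiber_connected X f"
    and x: "x \<in> topspace X" and y: "y \<in> topspace X" "f y = f x" "y \<notin> fclass X f x"
  shows "\<exists>U V. openin (Xf_topology X f) U \<and> openin (Xf_topology X f) V \<and>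
           fclass X f x \<in> U \<and> fclass X f y \<in> V \<and> disjnt U V"
proof -
  have "closedin X (fclass X f x)" "closedin X (fiber X f x - fclass X f x)"
    using closedin_fclass[OF contf x] closedin_fiber_diff_fclass[OF contf lfc x] by simp_all
  then obtain G H where GH: "openin X G" "openin X H" "fclass X f x \<subseteq> G"
    "fiber X f x - fclass X f x \<subseteq> H" "disjnt G H"
    using NX unfolding normal_space_def by (meson Diff_disjoint disjnt_def)
  define T where "T = {z \<in> topspace X. fiber X f z \<subseteq> G \<union> H}"
  have "openin X T"
    unfolding T_def using closed_map_openin_fibers_within[OF contf clf openin_Un[OF GH(1,2)]] .
  have fclass_T: "fclass X f s \<subseteq> G \<union> H" "s \<in> fclass X f s" if "s \<in> T" for s
    using that fclass_subset_fiber[of X f s] fclass_self[of s X f] unfolding T_def by auto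
  have side_G: "fclass X f s \<subseteq> G" if "s \<in> T" "s \<in> G" for s
    using connectedin_subset_of_separation[OF connectedin_fclass GH(1,2,5)] fclass_T that by blast
  have "fiber X f x \<subseteq> G \<union> H"
    using fclass_subset_fiber[of X f x] GH(3,4) by blast
  then have "x \<in> T" "y \<in> T"
    using x y(1,2) fiber_eq[of f y x X] unfolding T_def by simp_all
  moreover have "x \<in> G" "y \<in> H"
    using GH(3,4) fclass_self[OF x] y unfolding fiber_def by auto
  moreover have "openin (Xf_topology X f) (fclass X f ` (T \<inter> G))"
    "openin (Xf_topology X f) (fclass X f ` (T \<inter> H))"
    using open_map_fclass[OF contf lcd lfc] \<open>openin X T\<close> GH(1,2) unfolding open_map_def by auto
  moreover have "disjnt (fclass X f ` (T \<inter> G)) (fclass X f ` (T \<inter> H))"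
    unfolding disjnt_def
  proof (intro equals0I)
    fix c assume "c \<in> fclass X f ` (T \<inter> G) \<inter> fclass X f ` (T \<inter> H)"
    then obtain s1 s2 where "s1 \<in> T" "s1 \<in> G" "s2 \<in> T" "s2 \<in> H" "fclass X f s2 = fclass X f s1"
      by auto
    then have "s2 \<in> G"
      using side_G fclass_T(2) by blast
    with \<open>s2 \<in> H\<close> GH(5) show False
      unfolding disjnt_def by blast
  qed
  ultimately show ?thesis
    by blast
qed

lemma Hausdorff_space_Xf_topology:
  fixes f :: "'a \<Rightarrow> 'b::real_normed_vector"
  assumes "normal_space X" "continuous_map X euclidean f" "closed_map X euclidean f"
    "local_convexity_data X f" "locally_fiber_connected X f"
  shows "Hausdorff_space (Xf_topology X f)"
  unfolding Hausdorff_space_def topspace_Xf_topology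
proof (intro allI impI, elim conjE)
  fix p q assume "p \<in> Xf X f" "q \<in> Xf X f" "p \<noteq> q"
  then obtain x y where "x \<in> topspace X" "p = fclass X f x" "y \<in> topspace X" "q = fclass X f y"
    unfolding Xf_def by blast
  then show "\<exists>U V. openin (Xf_topology X f) U \<and> openin (Xf_topology X f) V \<and> p \<in> U \<and> q \<in> V \<and> disjnt U V"
    using fclass_separated_by_values[OF assms(2)] fclass_separated_in_fiber[OF assms] fclass_eq \<open>p \<noteq> q\<close>
    by metis
qed

section \<open>The length distance on \<open>X\<^sub>f\<close>\<close>

lemma dXf_le_curve_length:
  assumes "a \<le> b" "continuous_map (top_of_set {a..b}) (Xf_topology X f) \<gamma>" "\<gamma> a = p" "\<gamma> b = q"
  shows "dXf X f p q \<le> curve_length (ftilde f \<circ> \<gamma>) a b"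
  unfolding dXf_def by (rule INF_lower2[of "(\<gamma>, a, b)"]) (use assms in auto)

lemma dXf_lessE:
  assumes "dXf X f p q < r"
  obtains \<gamma> a b where "a \<le> b" "continuous_map (top_of_set {a..b}) (Xf_topology X f) \<gamma>"
    "\<gamma> a = p" "\<gamma> b = q" "curve_length (ftilde f \<circ> \<gamma>) a b < r"
  using assms unfolding dXf_def INF_less_iff by auto

lemma dXf_greatest:
  assumes "\<And>\<gamma> a b. a \<le> b \<Longrightarrow> continuous_map (top_of_set {a..b}) (Xf_topology X f) \<gamma> \<Longrightarrow>
             \<gamma> a = p \<Longrightarrow> \<gamma> b = q \<Longrightarrow> L \<le> curve_length (ftilde f \<circ> \<gamma>) a b"
  shows "L \<le> dXf X f p q"
  unfolding dXf_def using assms by (auto intro!: INF_greatest)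

lemma dXf_self: "p \<in> Xf X f \<Longrightarrow> dXf X f p p = 0"
  using dXf_le_curve_length[where a = 0 and b = 0 and \<gamma> = "\<lambda>_. p" and X = X and f = f]
  by (simp add: o_def curve_length_const)

lemma dXf_commute: "dXf X f p q = dXf X f q p"
proof -
  have "dXf X f p q \<le> dXf X f q p" for p q
  proof (rule dXf_greatest)
    fix \<gamma> and a b :: real
    assume "a \<le> b" "continuous_map (top_of_set {a..b}) (Xf_topology X f) \<gamma>" "\<gamma> a = q" "\<gamma> b = p"
    moreover have "continuous_map (top_of_set {-b..-a}) (top_of_set {a..b}) uminus"
      by (auto intro!: continuous_intros)
    ultimately have "dXf X f p q \<le> curve_length (ftilde f \<circ> (\<gamma> \<circ> uminus)) (-b) (-a)"
      by (intro dXf_le_curve_length continuous_map_compose) auto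
    also have "\<dots> \<le> curve_length (ftilde f \<circ> \<gamma>) a b"
      using curve_length_reflect by (metis comp_assoc)
    finally show "dXf X f p q \<le> curve_length (ftilde f \<circ> \<gamma>) a b" .
  qed
  then show ?thesis
    by (metis antisym)
qed

lemma dXf_triangle: "dXf X f p q \<le> dXf X f p r + dXf X f r q"
proof (rule ennreal_le_epsilon)
  fix e :: real assume fin: "dXf X f p r + dXf X f r q < top" and "0 < e"
  have "d < d + ennreal (e / 2)" if "d < top" for d
    using that \<open>0 < e\<close> by (cases d) (auto simp flip: ennreal_plus intro!: ennreal_lessI)
  then have "dXf X f p r < dXf X f p r + ennreal (e / 2)" "dXf X f r q < dXf X f r q + ennreal (e / 2)"
    using fin by (auto simp: top_unique)
  then obtain \<gamma>1 a b \<gamma>2 c d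
    where "a \<le> b" and \<gamma>1: "continuous_map (top_of_set {a..b}) (Xf_topology X f) \<gamma>1"
    and "\<gamma>1 a = p" "\<gamma>1 b = r" "curve_length (ftilde f \<circ> \<gamma>1) a b < dXf X f p r + ennreal (e / 2)"
    and "c \<le> d" and \<gamma>2: "continuous_map (top_of_set {c..d}) (Xf_topology X f) \<gamma>2"
    and "\<gamma>2 c = r" "\<gamma>2 d = q" "curve_length (ftilde f \<circ> \<gamma>2) c d < dXf X f r q + ennreal (e / 2)"
    by (metis dXf_lessE)
  define \<gamma> where "\<gamma> t = (if t \<le> b then \<gamma>1 t else \<gamma>2 (t + (c - b)))" for t
  have "dXf X f p q \<le> curve_length (ftilde f \<circ> \<gamma>) a (d - (c - b))"
    unfolding \<gamma>_def using \<open>a \<le> b\<close> \<open>c \<le> d\<close> \<open>\<gamma>1 a = p\<close> \<open>\<gamma>1 b = r\<close> \<open>\<gamma>2 c = r\<close> \<open>\<gamma>2 d = q\<close>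
    by (intro dXf_le_curve_length continuous_map_join_shifted[OF _ _ \<gamma>1 \<gamma>2]) auto
  also have "\<dots> \<le> curve_length (ftilde f \<circ> \<gamma>1) a b + curve_length (ftilde f \<circ> \<gamma>2) c d"
    using curve_length_join_shifted[of a b c d "ftilde f \<circ> \<gamma>1" "ftilde f \<circ> \<gamma>2"]
      \<open>a \<le> b\<close> \<open>c \<le> d\<close> \<open>\<gamma>1 b = r\<close> \<open>\<gamma>2 c = r\<close>
    unfolding \<gamma>_def by (simp add: comp_def if_distrib cong: if_cong)
  also have "\<dots> \<le> (dXf X f p r + ennreal (e / 2)) + (dXf X f r q + ennreal (e / 2))"
    by (intro add_mono less_imp_le) fact+
  also have "\<dots> = dXf X f p r + dXf X f r q + ennreal e"
    using \<open>0 < e\<close> by (simp add: ac_simps flip: ennreal_plus)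
  finally show "dXf X f p q \<le> dXf X f p r + dXf X f r q + ennreal e" .
qed

lemma dXf_le_dist_convexity_chart:
  fixes f :: "'a \<Rightarrow> 'b::real_normed_vector"
  assumes chart: "convexity_chart X f x U C" and "u \<in> U"
    and seg: "closed_segment (f x) (f u) \<subseteq> f ` U"
  shows "dXf X f (fclass X f x) (fclass X f u) \<le> ennreal (dist (f x) (f u))"
proof -
  define \<gamma> where "\<gamma> = chart_section X f U \<circ> linepath (f x) (f u)"
  have seg01: "linepath (f x) (f u) ` {0..1} \<subseteq> f ` U"
    using seg by (simp add: linepath_image_01)
  then have "continuous_map (top_of_set {0..1}) (top_of_set (f ` U)) (linepath (f x) (f u))"
    by (auto simp: continuous_map_in_subtopology continuous_on_linepath)
  then have "continuous_map (top_of_set {0..1}) (Xf_topology X f) \<gamma>"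
    unfolding \<gamma>_def using continuous_map_chart_section[OF chart] by (rule continuous_map_compose)
  moreover have "x \<in> U"
    using chart unfolding convexity_chart_def by blast
  then have "\<gamma> 0 = fclass X f x" "\<gamma> 1 = fclass X f u"
    unfolding \<gamma>_def using chart_section_eq[OF chart] \<open>u \<in> U\<close> by (simp_all add: linepath_0' linepath_1')
  ultimately have "dXf X f (fclass X f x) (fclass X f u) \<le> curve_length (ftilde f \<circ> \<gamma>) 0 1"
    by (intro dXf_le_curve_length) auto
  also have "\<dots> = curve_length (linepath (f x) (f u)) 0 1"
    unfolding \<gamma>_def using seg01 ftilde_chart_section[OF chart]
    by (intro curve_length_cong) (simp add: image_subset_iff)
  also have "\<dots> \<le> ennreal (dist (f x) (f u))"
    by (rule curve_length_linepath)
  finally show ?thesis .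
qed

lemma exists_nbhd_dXf_less:
  fixes f :: "'a \<Rightarrow> 'b::real_normed_vector"
  assumes contf: "continuous_map X euclidean f" and lcd: "local_convexity_data X f"
    and lfc: "locally_fiber_connected X f" and "p \<in> Xf X f" and "e > 0"
  obtains N where "openin (Xf_topology X f) N" "p \<in> N" "\<And>q. q \<in> N \<Longrightarrow> dXf X f p q < ennreal e"
proof -
  obtain x where x: "x \<in> topspace X" "p = fclass X f x"
    using \<open>p \<in> Xf X f\<close> unfolding Xf_def by blast
  obtain U C where chart: "convexity_chart X f x U C"
    using convexity_chart_exists[OF lcd lfc openin_topspace x(1)] by metis
  then have U: "openin X U" "x \<in> U" "convex C" "f ` U \<subseteq> C"
    unfolding convexity_chart_def by blast+
  obtain r where "r > 0" and r: "C \<inter> ball (f x) r \<subseteq> f ` U"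
    using convexity_chart_nbhd[OF chart U(1,2) order_refl] nbhd_in_top_of_set_ball by metis
  define N
    where "N = fclass X f ` U \<inter> {c \<in> topspace (Xf_topology X f). ftilde f c \<in> ball (f x) (min r e)}"
  have "openin (Xf_topology X f) N"
    unfolding N_def using open_map_fclass[OF contf lcd lfc] U(1)
    by (intro openin_Int openin_continuous_map_preimage[OF continuous_map_ftilde[OF contf]])
       (auto simp: open_map_def)
  moreover have "p \<in> N"
    unfolding N_def using U(2) x \<open>r > 0\<close> \<open>e > 0\<close> by (auto simp: ftilde_fclass Xf_def)
  moreover have "dXf X f p q < ennreal e" if "q \<in> N" for q
  proof -
    obtain u where u: "u \<in> U" "q = fclass X f u"
      using \<open>q \<in> N\<close> unfolding N_def by blast
    moreover have "u \<in> topspace X"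
      using u(1) openin_subset[OF U(1)] by blast
    ultimately have "dist (f x) (f u) < min r e"
      using \<open>q \<in> N\<close> unfolding N_def by (simp add: ftilde_fclass)
    then have "closed_segment (f x) (f u) \<subseteq> C \<inter> ball (f x) r"
      using U u(1) \<open>r > 0\<close> by (intro closed_segment_subset convex_Int convex_ball) auto
    then have "dXf X f p q \<le> ennreal (dist (f x) (f u))"
      using dXf_le_dist_convexity_chart[OF chart u(1)] r x(2) u(2) by blast
    also have "\<dots> < ennreal e"
      using \<open>dist (f x) (f u) < min r e\<close> \<open>e > 0\<close> by (intro ennreal_lessI) auto
    finally show ?thesis .
  qed
  ultimately show thesis
    using that by blast
qed

lemma closedin_preimage_fclass_image_chart:
  assumes HXf: "Hausdorff_space (Xf_topology X f)" and contf: "continuous_map X euclidean f"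
    and chart: "convexity_chart X f x U C" and \<gamma>: "continuous_map Y (Xf_topology X f) \<gamma>"
    and K: "closed K" "K \<subseteq> f ` U"
    and shadow: "\<And>t. t \<in> topspace Y \<Longrightarrow> \<gamma> t \<in> fclass X f ` U \<Longrightarrow> ftilde f (\<gamma> t) \<in> K"
  shows "closedin Y {t \<in> topspace Y. \<gamma> t \<in> fclass X f ` U}"
proof -
  define T where "T = {t \<in> topspace Y. \<gamma> t \<in> fclass X f ` U}"
  obtain L where L: "closedin (Xf_topology X f) L"
    "fclass X f ` U = L \<inter> {c \<in> Xf X f. ftilde f c \<in> f ` U}"
    using closedin_fclass_image_chart[OF HXf contf chart] unfolding closedin_subtopology by blast
  have "Y closure_of T \<subseteq> T"
  proof
    fix t assume t: "t \<in> Y closure_of T"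
    then have "t \<in> topspace Y"
      using closure_of_subset_topspace[of Y T] by blast
    have "(ftilde f \<circ> \<gamma>) ` (Y closure_of T) \<subseteq> closure ((ftilde f \<circ> \<gamma>) ` T)"
      using continuous_map_image_closure_subset
          [OF continuous_map_compose[OF \<gamma> continuous_map_ftilde[OF contf]]]
      by simp
    also have "\<dots> \<subseteq> K"
      using shadow K(1) unfolding T_def by (intro closure_minimal) auto
    finally have "ftilde f (\<gamma> t) \<in> f ` U"
      using t K(2) by auto
    moreover have "\<gamma> t \<in> Xf X f"
      using \<gamma> \<open>t \<in> topspace Y\<close> continuous_map_image_subset_topspace by fastforce
    moreover have "\<gamma> ` (Y closure_of T) \<subseteq> Xf_topology X f closure_of (\<gamma> ` T)"
      using \<gamma> by (rule continuous_map_image_closure_subset)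
    then have "\<gamma> t \<in> Xf_topology X f closure_of (fclass X f ` U)"
      using t closure_of_mono[of "\<gamma> ` T" "fclass X f ` U"] unfolding T_def by blast
    then have "\<gamma> t \<in> L"
      using closure_of_minimal[OF _ L(1)] L(2) by blast
    ultimately show "t \<in> T"
      unfolding T_def using \<open>t \<in> topspace Y\<close> L(2) by blast
  qed
  moreover have "T \<subseteq> topspace Y"
    unfolding T_def by blast
  ultimately show ?thesis
    unfolding T_def[symmetric] using closure_of_subset_eq by blast
qed

lemma short_path_stays_in_chart:
  fixes f :: "'a \<Rightarrow> 'b::real_normed_vector"
  assumes HXf: "Hausdorff_space (Xf_topology X f)" and contf: "continuous_map X euclidean f"
    and lcd: "local_convexity_data X f" and lfc: "locally_fiber_connected X f"
    and chart: "convexity_chart X f x U C"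
    and K: "closed K" "K \<subseteq> f ` U" "C \<inter> ball (f x) r \<subseteq> K"
    and \<gamma>: "continuous_map (top_of_set {a..b}) (Xf_topology X f) \<gamma>" "a \<le> b" "\<gamma> a = fclass X f x"
    and length: "curve_length (ftilde f \<circ> \<gamma>) a b < ennreal r"
  shows "\<gamma> b \<in> fclass X f ` U"
proof -
  have U: "openin X U" "x \<in> U" "f ` U \<subseteq> C"
    using chart unfolding convexity_chart_def by blast+
  define T where "T = {t \<in> topspace (top_of_set {a..b}). \<gamma> t \<in> fclass X f ` U}"
  have "openin (Xf_topology X f) (fclass X f ` U)"
    using open_map_fclass[OF contf lcd lfc] U(1) unfolding open_map_def by blast
  then have "openin (top_of_set {a..b}) T"
    unfolding T_def using \<gamma>(1) by (rule openin_continuous_map_preimage[rotated])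
  moreover have "closedin (top_of_set {a..b}) T"
    unfolding T_def
  proof (rule closedin_preimage_fclass_image_chart[OF HXf contf chart \<gamma>(1) K(1,2)])
    fix t assume "t \<in> topspace (top_of_set {a..b})" "\<gamma> t \<in> fclass X f ` U"
    then obtain u where u: "u \<in> U" "\<gamma> t = fclass X f u" "a \<le> t" "t \<le> b"
      by auto
    then have "ftilde f (\<gamma> t) = f u"
      using openin_subset[OF U(1)] ftilde_fclass by (metis subsetD)
    moreover have "ennreal (dist (f x) (f u)) < ennreal r"
      using dist_le_curve_length[of a t b "ftilde f \<circ> \<gamma>"] u(3,4) length \<gamma>(3)
        ftilde_fclass[of x X f] U(2) openin_subset[OF U(1)] \<open>ftilde f (\<gamma> t) = f u\<close> by auto
    then have "f u \<in> C \<inter> ball (f x) r"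
      using U(3) u(1) by (auto simp: ennreal_less_iff)
    ultimately show "ftilde f (\<gamma> t) \<in> K"
      using K(3) by auto
  qed
  moreover have "a \<in> T"
    unfolding T_def using \<gamma>(2,3) U(2) by auto
  ultimately have "T = {a..b}"
    using connected_space_clopen_in[of "top_of_set {a..b}"] by (simp add: T_def) blast
  then have "b \<in> T"
    using \<gamma>(2) by simp
  then show ?thesis
    unfolding T_def by simp
qed

lemma exists_dXf_ball_subset:
  fixes f :: "'a \<Rightarrow> 'b::real_normed_vector"
  assumes HX: "Hausdorff_space X" and NX: "normal_space X" and contf: "continuous_map X euclidean f"
    and clf: "closed_map X euclidean f" and lcd: "local_convexity_data X f"
    and lfc: "locally_fiber_connected X f"
    and W: "openin (Xf_topology X f) W" and "p \<in> W"
  obtains r where "r > 0" "\<And>q. dXf X f p q < ennreal r \<Longrightarrow> q \<in> W"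
proof -
  obtain x where x: "x \<in> topspace X" "p = fclass X f x"
    using \<open>p \<in> W\<close> openin_subset[OF W] unfolding topspace_Xf_topology Xf_def by blast
  have "openin X {z \<in> topspace X. fclass X f z \<in> W}"
    using W by (simp add: openin_Xf_topology)
  then obtain U C where "U \<subseteq> {z \<in> topspace X. fclass X f z \<in> W}" and chart: "convexity_chart X f x U C"
    using convexity_chart_exists[OF lcd lfc] x \<open>p \<in> W\<close> by (metis (mono_tags, lifting) mem_Collect_eq)
  then have UW: "fclass X f ` U \<subseteq> W"
    by blast
  have U: "openin X U" "x \<in> U"
    using chart unfolding convexity_chart_def by blast+
  have "regular_space X"
    using HX NX by (simp add: Hausdorff_imp_t1_space normal_t1_imp_regular_space)
  then have "neighbourhood_base_of (closedin X) X"
    by (simp add: neighbourhood_base_of_closedin)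
  then obtain N M where N: "openin X N" "closedin X M" "x \<in> N" "N \<subseteq> M" "M \<subseteq> U"
    using U unfolding neighbourhood_base_of by meson
  obtain r where "r > 0" and r: "C \<inter> ball (f x) r \<subseteq> f ` N"
    using convexity_chart_nbhd[OF chart N(1,3)] N(4,5) nbhd_in_top_of_set_ball by (metis order_trans)
  have "closedin euclidean (f ` M)"
    using clf N(2) unfolding closed_map_def by blast
  moreover have "f ` M \<subseteq> f ` U"
    using N(5) by (rule image_mono)
  moreover have "C \<inter> ball (f x) r \<subseteq> f ` M"
    using r image_mono[OF N(4)] by (rule order_trans)
  ultimately have K: "closed (f ` M)" "f ` M \<subseteq> f ` U" "C \<inter> ball (f x) r \<subseteq> f ` M"
    by simp_all
  have "q \<in> W" if dq: "dXf X f p q < ennreal r" for q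
  proof -
    obtain \<gamma> a b where "a \<le> b" and \<gamma>: "continuous_map (top_of_set {a..b}) (Xf_topology X f) \<gamma>"
      and "\<gamma> a = p" "\<gamma> b = q" and "curve_length (ftilde f \<circ> \<gamma>) a b < ennreal r"
      by (rule dXf_lessE[OF dq])
    then have "q \<in> fclass X f ` U"
      using short_path_stays_in_chart[OF Hausdorff_space_Xf_topology[OF NX contf clf lcd lfc]
          contf lcd lfc chart K \<gamma>] x(2) by blast
    then show "q \<in> W"
      using UW by blast
  qed
  then show thesis
    using that \<open>r > 0\<close> by blast
qed

theorem proposition2p22:
  fixes X :: "'a topology" and f :: "'a \<Rightarrow> 'b::banach"
  assumes "connected_space X" and "locally_connected_space X"
    and "Hausdorff_space X" and "normal_space X" and "first_countable X"
    and "continuous_map X euclidean f" and "closed_map X euclidean f"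
    and "local_convexity_data X f" and "locally_fiber_connected X f"
  shows "(\<forall>p\<in>Xf X f. \<forall>q\<in>Xf X f. dXf X f p q < \<infinity>)
    \<and> Metric_space (Xf X f) (\<lambda>p q. enn2real (dXf X f p q))
    \<and> Metric_space.mtopology (Xf X f) (\<lambda>p q. enn2real (dXf X f p q)) = Xf_topology X f"
proof -
  note contf = assms(6) and clf = assms(7) and lcd = assms(8) and lfc = assms(9)
  have "(\<forall>p\<in>topspace (Xf_topology X f). \<forall>q\<in>topspace (Xf_topology X f). dXf X f p q < \<infinity>)
    \<and> Metric_space (topspace (Xf_topology X f)) (\<lambda>p q. enn2real (dXf X f p q))
    \<and> Metric_space.mtopology (topspace (Xf_topology X f)) (\<lambda>p q. enn2real (dXf X f p q)) = Xf_topology X f"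
  proof (rule ennreal_distance_metrizes)
    show "connected_space (Xf_topology X f)"
      using assms(1) by (rule connected_space_Xf_topology)
    show "t1_space (Xf_topology X f)"
      using Hausdorff_space_Xf_topology[OF assms(4) contf clf lcd lfc] by (rule Hausdorff_imp_t1_space)
    show "dXf X f p p = 0" if "p \<in> topspace (Xf_topology X f)" for p
      using that by (simp add: dXf_self)
    show "\<exists>N. openin (Xf_topology X f) N \<and> p \<in> N \<and> (\<forall>q\<in>N. dXf X f p q < ennreal e)"
      if "p \<in> topspace (Xf_topology X f)" "e > 0" for p e
      using exists_nbhd_dXf_less[OF contf lcd lfc] that by (metis topspace_Xf_topology)
    show "\<exists>r>0. \<forall>q. dXf X f p q < ennreal r \<longrightarrow> q \<in> W" if "openin (Xf_topology X f) W" "p \<in> W" for W p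
      using exists_dXf_ball_subset[OF assms(3,4) contf clf lcd lfc that] by metis
  qed (use dXf_commute dXf_triangle in auto)
  then show ?thesis
    by simp
qed

end
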